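(* Let $A\in\mathbb{R}^{m\times n}$ have no zero row, with rows $a_1^T,\dots,a_m^T$, let $b\in\mathbb{R}^m$ with $Ax=b$ consistent, and let $x^\dagger$ be the minimum-norm least-squares solution. Let $0<\mu_i<2$ for $1\le i\le m$, ${\bf u}=(\mu_1,\dots,\mu_m)$, $\Lambda=\mathrm{diag}(\mu_1,\dots,\mu_m)$, $M=\mathrm{diag}(1/\|a_1\|_2^2,\dots,1/\|a_m\|_2^2)$, $P_k(\mu_k)=I-\mu_ka_ka_k^T/\|a_k\|_2^2$, $Q({\bf u})=P_m(\mu_m)\cdots P_1(\mu_1)$, and let $C({\bf u})\in\mathbb{R}^{m\times m}$ be a unit upper triangular matrix with $A_{\mathcal S}({\bf u})=C({\bf u})A$, where $A_{\mathcal S}({\bf u})=(Q_1({\bf u}_1)a_1,\dots,Q_m({\bf u}_m)a_m)^T$, $Q_j({\bf u}_j)=P_m(\mu_m)\cdots P_{j+1}(\mu_{j+1})$ for $j<m$, $Q_m({\bf u}_m)=I$. Let $y_0\in\mathbb{R}^n$, $y_k=y_{k-1}+A^T[C({\bf u})]^T\Lambda M(b-Ay_{k-1})$ for $k\ge1$, and $\bar e_k=y_k-x^\dagger-P_{N(A)}y_0$. Let $\sigma_i({\bf u})$ denote the singular values of $Q({\bf u})$. Then for all $k\ge1$, $$\|\bar e_k\|_2\le\max_{0<\sigma_i({\bf u})<1}\sigma_i({\bf u})\,\|\bar e_{k-1}\|_2\quad\text{and}\quad \|\bar e_k\|_2\le\max_{0<\sigma_i({\bf u})<1}[\sigma_i({\bf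 u})]^k\,\|\bar e_0\|_2.$$
   Context: $P_{N(A)}$ is the orthogonal projection onto the null space of $A$; the maxima are over those singular values of $Q({\bf u})$ lying strictly between $0$ and $1$. *)

theory Defs
  imports "Jordan_Normal_Form.Char_Poly"
begin

definition vnorm2 :: "real vec \<Rightarrow> real" where
  "vnorm2 v = sqrt (v \<bullet> v)"

definition outer :: "real vec \<Rightarrow> real mat" where
  "outer a = mat (dim_vec a) (dim_vec a) (\<lambda>(i,j). a $ i * a $ j)"

(* P_k(mu_k) = I - mu_k a_k a_k^T / ||a_k||^2  (rows indexed 0..m-1) *)
definition Pmat :: "real mat \<Rightarrow> (nat \<Rightarrow> real) \<Rightarrow> nat \<Rightarrow> real mat" where
  "Pmat A u k = 1\<^sub>m (dim_col A) -
     (u k / (vnorm2 (row A k))\<^sup>2) \<cdot>\<^sub>m outer (row A k)"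

(* Qfrom A u j = P_{m-1} * ... * P_j  (identity if j >= m) *)
definition Qfrom :: "real mat \<Rightarrow> (nat \<Rightarrow> real) \<Rightarrow> nat \<Rightarrow> real mat" where
  "Qfrom A u j = foldr (\<lambda>k M. M * Pmat A u k) [j..<dim_row A] (1\<^sub>m (dim_col A))"

definition Qmat :: "real mat \<Rightarrow> (nat \<Rightarrow> real) \<Rightarrow> real mat" where
  "Qmat A u = Qfrom A u 0"

definition A_S :: "real mat \<Rightarrow> (nat \<Rightarrow> real) \<Rightarrow> real mat" where
  "A_S A u = mat (dim_row A) (dim_col A) (\<lambda>(i,j). (Qfrom A u (Suc i) *\<^sub>v row A i) $ j)"

definition Lambda_mat :: "nat \<Rightarrow> (nat \<Rightarrow> real) \<Rightarrow> real mat" where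
  "Lambda_mat m u = mat m m (\<lambda>(i,j). if i = j then u i else 0)"

definition M_mat :: "real mat \<Rightarrow> real mat" where
  "M_mat A = mat (dim_row A) (dim_row A)
     (\<lambda>(i,j). if i = j then 1 / (vnorm2 (row A i))\<^sup>2 else 0)"

definition singular_value :: "real mat \<Rightarrow> real \<Rightarrow> bool" where
  "singular_value Q s \<longleftrightarrow> s \<ge> 0 \<and> eigenvalue (transpose_mat Q * Q) (s\<^sup>2)"

(* max of the singular values lying strictly in (0,1); 0 if there are none *)
definition max_sv01 :: "real mat \<Rightarrow> real" where
  "max_sv01 Q = Max (insert 0 {s. singular_value Q s \<and> 0 < s \<and> s < 1})"

definition lsq_solution :: "real mat \<Rightarrow> real vec \<Rightarrow> real vec \<Rightarrow> bool" where
  "lsq_solution A b x \<longleftrightarrow> x \<in> carrier_vec (dim_col A) \<and>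
     (\<forall>z \<in> carrier_vec (dim_col A). vnorm2 (A *\<^sub>v x - b) \<le> vnorm2 (A *\<^sub>v z - b))"

definition min_norm_lsq :: "real mat \<Rightarrow> real vec \<Rightarrow> real vec \<Rightarrow> bool" where
  "min_norm_lsq A b x \<longleftrightarrow> lsq_solution A b x \<and>
     (\<forall>z. lsq_solution A b z \<longrightarrow> vnorm2 x \<le> vnorm2 z)"

definition proj_null :: "real mat \<Rightarrow> real vec \<Rightarrow> real vec" where
  "proj_null A y = (THE p. p \<in> carrier_vec (dim_col A) \<and> A *\<^sub>v p = 0\<^sub>v (dim_row A) \<and>
      (\<forall>z \<in> carrier_vec (dim_col A). A *\<^sub>v z = 0\<^sub>v (dim_row A) \<longrightarrow> (y - p) \<bullet> z = 0))"

end

theory Submission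
  imports Defs "HOL-Analysis.Function_Topology"
begin

(* Each P_k is symmetric, fixes the hyperplane orthogonal to a_k and, since 0 < mu_k < 2,
   strictly shortens every vector not orthogonal to a_k. Hence Q = P_m ... P_1 is a contraction
   whose isometric vectors are exactly N(A), and both Q and Q^T fix N(A). Telescoping
   Q_j = Q_(j+1) P_j gives I - Q = A_S^T Lambda M A = A^T C^T Lambda M A, so the error satisfies
   e_k = Q e_(k-1) and stays orthogonal to N(A). On the Q^T Q-invariant subspace N(A)^perp, the
   quadratic form of Q^T Q is maximised on the unit sphere by an eigenvector, whose eigenvalue
   l is < 1 because eigenvalue 1 would make it isometric; so l = 0 or sqrt l is a singular value
   in (0,1), and |Q e| <= max sigma |e| there. The maximiser, like the orthogonal projection onto
   N(A), is obtained by compactness of closed bounded sets of coordinate vectors. *)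

section \<open>Real vectors and inner products\<close>

lemma smult_zero_vec [simp]: "(k :: 'a :: mult_zero) \<cdot>\<^sub>v 0\<^sub>v n = 0\<^sub>v n"
  by (rule eq_vecI) auto

lemma index_mult_mat_vec_sum:
  "M \<in> carrier_mat k n \<Longrightarrow> v \<in> carrier_vec n \<Longrightarrow> i < k \<Longrightarrow> (M *\<^sub>v v) $ i = (\<Sum>j<n. M $$ (i, j) * v $ j)"
  by (simp add: scalar_prod_def lessThan_atLeast0 row_def)

lemma mult_mat_vec_eq_0_iff:
  "A \<in> carrier_mat m n \<Longrightarrow> A *\<^sub>v x = 0\<^sub>v m \<longleftrightarrow> (\<forall>i<m. row A i \<bullet> x = 0)"
  by (auto simp: vec_eq_iff)

lemma sprod_self_nonneg: "0 \<le> (v :: real vec) \<bullet> v"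
  using conjugate_square_ge_0_vec[of v] by simp

lemma sprod_self_eq_0_iff: "(v :: real vec) \<in> carrier_vec n \<Longrightarrow> v \<bullet> v = 0 \<longleftrightarrow> v = 0\<^sub>v n"
  using conjugate_square_eq_0_vec[of v n] by simp

lemma sprod_self_pos_iff: "(v :: real vec) \<in> carrier_vec n \<Longrightarrow> 0 < v \<bullet> v \<longleftrightarrow> v \<noteq> 0\<^sub>v n"
  using conjugate_square_greater_0_vec[of v n] by simp

lemma vnorm2_sq: "(vnorm2 v)\<^sup>2 = v \<bullet> v"
  unfolding vnorm2_def by (simp add: sprod_self_nonneg)

lemma vnorm2_le_scaled:
  assumes "v \<bullet> v \<le> s\<^sup>2 * (w \<bullet> w)" and "0 \<le> s"
  shows "vnorm2 v \<le> s * vnorm2 w"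
proof -
  have "vnorm2 v \<le> sqrt (s\<^sup>2 * (w \<bullet> w))"
    unfolding vnorm2_def using assms(1) by (rule real_sqrt_le_mono)
  also have "\<dots> = s * vnorm2 w"
    unfolding vnorm2_def using assms(2) by (simp add: real_sqrt_mult)
  finally show ?thesis .
qed

lemma sprod_add_smult_expand:
  fixes a b c d :: "real vec"
  assumes "a \<in> carrier_vec n" "b \<in> carrier_vec n" "c \<in> carrier_vec n" "d \<in> carrier_vec n"
  shows "(a + t \<cdot>\<^sub>v b) \<bullet> (c + t \<cdot>\<^sub>v d) = a \<bullet> c + t * (a \<bullet> d) + t * (b \<bullet> c) + t\<^sup>2 * (b \<bullet> d)"
  using assms
  by (simp add: add_scalar_prod_distrib[of _ n] scalar_prod_add_distrib[of _ n]
      power2_eq_square algebra_simps)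

lemma sprod_minus_self:
  fixes u v :: "real vec"
  assumes "u \<in> carrier_vec n" "v \<in> carrier_vec n"
  shows "(u - v) \<bullet> (u - v) = u \<bullet> u - 2 * (u \<bullet> v) + v \<bullet> v"
  using assms by (simp add: minus_scalar_prod_distrib[of _ n] scalar_prod_minus_distrib[of _ n]
      comm_scalar_prod[of v n u])

lemma linear_coeff_eq_0_if_quadratic_nonneg:
  fixes c d :: real
  assumes "\<And>t. 0 \<le> t * c + t\<^sup>2 * d"
  shows "c = 0"
proof (rule ccontr)
  assume "c \<noteq> 0"
  define r where "r = \<bar>d\<bar> + 1"
  have r: "r > 0" "d < r" unfolding r_def by auto
  have "0 \<le> (- c / r) * c + (- c / r)\<^sup>2 * d" by (rule assms)
  also have "\<dots> = c\<^sup>2 * (d - r) / r\<^sup>2"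
    using r by (simp add: field_simps power2_eq_square)
  also have "\<dots> < 0"
    using r \<open>c \<noteq> 0\<close> by (intro divide_neg_pos mult_pos_neg) auto
  finally show False by simp
qed

lemma orthogonal_if_nearest:
  fixes y p z :: "real vec"
  assumes y: "y \<in> carrier_vec n" and p: "p \<in> carrier_vec n" and z: "z \<in> carrier_vec n"
    and nearest: "\<And>t. (y - p) \<bullet> (y - p) \<le> (y - (p + t \<cdot>\<^sub>v z)) \<bullet> (y - (p + t \<cdot>\<^sub>v z))"
  shows "(y - p) \<bullet> z = 0"
proof -
  have "0 \<le> t * (- 2 * ((y - p) \<bullet> z)) + t\<^sup>2 * (z \<bullet> z)" for t
  proof -
    have "y - (p + t \<cdot>\<^sub>v z) = (y - p) + (- t) \<cdot>\<^sub>v z"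
      using y p z by (auto simp: vec_eq_iff)
    then have "(y - (p + t \<cdot>\<^sub>v z)) \<bullet> (y - (p + t \<cdot>\<^sub>v z))
        = (y - p) \<bullet> (y - p) + t * (- 2 * ((y - p) \<bullet> z)) + t\<^sup>2 * (z \<bullet> z)"
      using sprod_add_smult_expand[of "y - p" n z "y - p" z "- t"] comm_scalar_prod[of z n "y - p"] y p z
      by simp
    then show ?thesis using nearest[of t] by simp
  qed
  then show ?thesis using linear_coeff_eq_0_if_quadratic_nonneg by fastforce
qed

lemma sprod_minus_self_lower:
  fixes y q :: "real vec"
  assumes y: "y \<in> carrier_vec n" and q: "q \<in> carrier_vec n"
  shows "q \<bullet> q / 2 - y \<bullet> y \<le> (y - q) \<bullet> (y - q)"
proof -
  have "(\<Sum>i<n. q $ i * q $ i / 2 - y $ i * y $ i) \<le> (\<Sum>i<n. (y $ i - q $ i) * (y $ i - q $ i))"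
  proof (rule sum_mono)
    fix i
    show "q $ i * q $ i / 2 - y $ i * y $ i \<le> (y $ i - q $ i) * (y $ i - q $ i)"
      using sum_squares_ge_zero[of "2 * y $ i - q $ i" 0] by (simp add: algebra_simps power2_eq_square)
  qed
  then show ?thesis using y q
    by (simp add: scalar_prod_def lessThan_atLeast0 sum_subtractf sum_divide_distrib)
qed

section \<open>Maxima on closed bounded sets of vectors\<close>

lemma abs_le_square_plus_one: "\<bar>a :: real\<bar> \<le> a\<^sup>2 + 1"
proof -
  have "0 \<le> (\<bar>a\<bar> - 1)\<^sup>2" by simp
  then have "2 * \<bar>a\<bar> \<le> a * a + 1" by (simp add: power2_eq_square algebra_simps)
  then show ?thesis using zero_le_square[of a] by (simp add: power2_eq_square)
qed

abbreviation coord_topology :: "nat \<Rightarrow> (nat \<Rightarrow> real) topology" where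
  "coord_topology n \<equiv> product_topology (\<lambda>_. euclideanreal) {..<n}"

definition coords :: "nat \<Rightarrow> real vec \<Rightarrow> nat \<Rightarrow> real" where
  "coords n x = restrict (($) x) {..<n}"

lemma coords_in_topspace: "coords n x \<in> topspace (coord_topology n)"
  by (simp add: coords_def topspace_product_topology)

lemma vec_coords: "x \<in> carrier_vec n \<Longrightarrow> vec n (coords n x) = x"
  by (auto simp: coords_def)

lemma sprod_vec_eq_sum: "v \<in> carrier_vec n \<Longrightarrow> vec n g \<bullet> v = (\<Sum>i<n. g i * v $ i)"
  by (simp add: scalar_prod_def lessThan_atLeast0)

lemma continuous_map_sprod_vec:
  assumes "v \<in> carrier_vec n"
  shows "continuous_map (coord_topology n) euclideanreal (\<lambda>g. vec n g \<bullet> v)"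
  unfolding sprod_vec_eq_sum[OF assms]
  by (intro continuous_map_sum continuous_map_real_mult continuous_map_const[THEN iffD2]
      continuous_map_product_projection) auto

lemma continuous_map_quadratic_form:
  assumes B: "B \<in> carrier_mat n n"
  shows "continuous_map (coord_topology n) euclideanreal (\<lambda>g. vec n g \<bullet> (B *\<^sub>v vec n g))"
proof -
  have "(\<lambda>g. vec n g \<bullet> (B *\<^sub>v vec n g)) = (\<lambda>g. \<Sum>i<n. g i * (\<Sum>j<n. B $$ (i, j) * g j))"
    using B by (simp add: sprod_vec_eq_sum scalar_prod_def lessThan_atLeast0 row_def)
  then show ?thesis
    by (simp only:) (intro continuous_map_sum continuous_map_real_mult
        continuous_map_const[THEN iffD2] continuous_map_product_projection; simp)
qed

lemma closedin_coords_orthogonal: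
  assumes f: "continuous_map (coord_topology n) euclideanreal (\<lambda>g. f (vec n g))"
    and S: "closed S" and Z: "Z \<subseteq> carrier_vec n"
  shows "closedin (coord_topology n)
    {g \<in> topspace (coord_topology n). f (vec n g) \<in> S \<and> (\<forall>z\<in>Z. vec n g \<bullet> z = 0)}"
proof -
  have "closedin (coord_topology n) {g \<in> topspace (coord_topology n). f (vec n g) \<in> S}"
    by (rule closedin_continuous_map_preimage[OF f]) (use S in simp)
  moreover have "closedin (coord_topology n) {g \<in> topspace (coord_topology n). vec n g \<bullet> z \<in> {0}}"
    if "z \<in> Z" for z
    using that Z by (intro closedin_continuous_map_preimage[OF continuous_map_sprod_vec]) auto
  ultimately have "closedin (coord_topology n)
      (\<Inter> (insert {g \<in> topspace (coord_topology n). f (vec n g) \<in> S}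
        ((\<lambda>z. {g \<in> topspace (coord_topology n). vec n g \<bullet> z \<in> {0}}) ` Z)))"
    by (intro closedin_Inter) blast+
  moreover have "\<Inter> (insert {g \<in> topspace (coord_topology n). f (vec n g) \<in> S}
        ((\<lambda>z. {g \<in> topspace (coord_topology n). vec n g \<bullet> z \<in> {0}}) ` Z))
    = {g \<in> topspace (coord_topology n). f (vec n g) \<in> S \<and> (\<forall>z\<in>Z. vec n g \<bullet> z = 0)}"
    by blast
  ultimately show ?thesis by simp
qed

lemma coords_bounded_in_box:
  assumes g: "g \<in> topspace (coord_topology n)" and bound: "vec n g \<bullet> vec n g \<le> R"
  shows "g \<in> PiE {..<n} (\<lambda>_. {-(R + 1)..R + 1})"
proof -
  have "g i \<in> {-(R + 1)..R + 1}" if i: "i < n" for i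
  proof -
    have "(g i)\<^sup>2 \<le> (\<Sum>j<n. (g j)\<^sup>2)" using i by (intro member_le_sum) auto
    also have "\<dots> \<le> R" using bound by (simp add: sprod_vec_eq_sum power2_eq_square)
    finally have "(g i)\<^sup>2 \<le> R" .
    then show ?thesis using abs_le_square_plus_one[of "g i"] unfolding atLeastAtMost_iff by linarith
  qed
  then show ?thesis using g by (auto simp: topspace_product_topology)
qed

lemma continuous_attains_max_on_vecs:
  fixes F :: "real vec \<Rightarrow> real"
  assumes closed: "closedin (coord_topology n) {g \<in> topspace (coord_topology n). vec n g \<in> K}"
    and K: "K \<subseteq> carrier_vec n" "K \<noteq> {}" and bounded: "\<And>x. x \<in> K \<Longrightarrow> x \<bullet> x \<le> R"
    and cont: "continuous_map (coord_topology n) euclideanreal (\<lambda>g. F (vec n g))"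
  shows "\<exists>x\<in>K. \<forall>y\<in>K. F y \<le> F x"
proof -
  let ?G = "{g \<in> topspace (coord_topology n). vec n g \<in> K}"
  have "?G \<subseteq> PiE {..<n} (\<lambda>_. {-(R + 1)..R + 1})"
    using bounded coords_bounded_in_box by blast
  then have "compactin (coord_topology n) ?G"
    by (intro closed_compactin[OF _ _ closed]) (simp_all add: compactin_PiE)
  then have compact: "compact ((\<lambda>g. F (vec n g)) ` ?G)"
    using image_compactin[OF _ cont] by simp
  have vec_coords_K: "vec n (coords n x) = x" if "x \<in> K" for x
    using that K(1) by (intro vec_coords) blast
  have coords_in: "coords n x \<in> ?G" if "x \<in> K" for x
    using that coords_in_topspace[of n x] vec_coords_K[OF that] by simp
  then have "(\<lambda>g. F (vec n g)) ` ?G \<noteq> {}" using K(2) by blast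
  then have "\<exists>g\<in>?G. \<forall>h\<in>?G. F (vec n h) \<le> F (vec n g)"
    using compact_attains_sup[OF compact] by auto
  then obtain g where g: "g \<in> ?G" and max: "\<And>h. h \<in> ?G \<Longrightarrow> F (vec n h) \<le> F (vec n g)"
    by blast
  have "F y \<le> F (vec n g)" if "y \<in> K" for y
    using max[OF coords_in[OF that]] vec_coords_K[OF that] by simp
  then show ?thesis using g by blast
qed

section \<open>Orthogonal projection onto the null space\<close>

lemma nearest_point_of_null_space_exists:
  fixes A :: "real mat"
  assumes A: "A \<in> carrier_mat m n" and y: "y \<in> carrier_vec n"
  shows "\<exists>p\<in>carrier_vec n. A *\<^sub>v p = 0\<^sub>v m \<and>
           (\<forall>q\<in>carrier_vec n. A *\<^sub>v q = 0\<^sub>v m \<longrightarrow> (y - p) \<bullet> (y - p) \<le> (y - q) \<bullet> (y - q))"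
proof -
  define K where "K = {x \<in> carrier_vec n. A *\<^sub>v x = 0\<^sub>v m \<and> (y - x) \<bullet> (y - x) \<le> y \<bullet> y}"
  have dist_eq: "(y - x) \<bullet> (y - x) = y \<bullet> y - 2 * (x \<bullet> y) + x \<bullet> (1\<^sub>m n *\<^sub>v x)"
    if "x \<in> carrier_vec n" for x
    using sprod_minus_self[OF y that] comm_scalar_prod[OF y that] that by simp
  have cont: "continuous_map (coord_topology n) euclideanreal (\<lambda>g. - ((y - vec n g) \<bullet> (y - vec n g)))"
    unfolding dist_eq[OF vec_carrier]
    by (intro continuous_map_minus continuous_map_add continuous_map_diff continuous_map_real_mult
        continuous_map_const[THEN iffD2] continuous_map_sprod_vec[OF y]
        continuous_map_quadratic_form) auto
  have rows: "A *\<^sub>v x = 0\<^sub>v m \<longleftrightarrow> (\<forall>r\<in>row A ` {..<m}. x \<bullet> r = 0)" if "x \<in> carrier_vec n" for x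
    using mult_mat_vec_eq_0_iff[OF A] comm_scalar_prod[OF _ that] A that by auto
  have "closedin (coord_topology n) {g \<in> topspace (coord_topology n).
      (y - vec n g) \<bullet> (y - vec n g) \<in> {..y \<bullet> y} \<and> (\<forall>r\<in>row A ` {..<m}. vec n g \<bullet> r = 0)}"
    using A by (intro closedin_coords_orthogonal continuous_map_minus[OF cont, simplified]) auto
  moreover have "{g \<in> topspace (coord_topology n). (y - vec n g) \<bullet> (y - vec n g) \<in> {..y \<bullet> y}
      \<and> (\<forall>r\<in>row A ` {..<m}. vec n g \<bullet> r = 0)} = {g \<in> topspace (coord_topology n). vec n g \<in> K}"
    unfolding K_def using rows by auto
  ultimately have closed: "closedin (coord_topology n) {g \<in> topspace (coord_topology n). vec n g \<in> K}"
    by simp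
  have K: "K \<subseteq> carrier_vec n" unfolding K_def by auto
  have bounded: "x \<bullet> x \<le> 4 * (y \<bullet> y)" if "x \<in> K" for x
    using that sprod_minus_self_lower[OF y, of x] unfolding K_def by auto
  have "0\<^sub>v n \<in> K" unfolding K_def using A y by auto
  then have "K \<noteq> {}" by blast
  then have "\<exists>p\<in>K. \<forall>q\<in>K. - ((y - q) \<bullet> (y - q)) \<le> - ((y - p) \<bullet> (y - p))"
    by (rule continuous_attains_max_on_vecs[OF closed K _ bounded cont])
  then obtain p where p: "p \<in> K" and max: "\<And>q. q \<in> K \<Longrightarrow> (y - p) \<bullet> (y - p) \<le> (y - q) \<bullet> (y - q)"
    by (metis neg_le_iff_le)
  have "(y - p) \<bullet> (y - p) \<le> (y - q) \<bullet> (y - q)" if "q \<in> carrier_vec n" "A *\<^sub>v q = 0\<^sub>v m" for q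
  proof (cases "q \<in> K")
    case False
    then have "y \<bullet> y < (y - q) \<bullet> (y - q)" unfolding K_def using that by auto
    moreover have "(y - p) \<bullet> (y - p) \<le> y \<bullet> y" using p unfolding K_def by auto
    ultimately show ?thesis by simp
  qed (rule max)
  then show ?thesis using p unfolding K_def by blast
qed

lemma null_space_projection_exists:
  fixes A :: "real mat"
  assumes A: "A \<in> carrier_mat m n" and y: "y \<in> carrier_vec n"
  shows "\<exists>p\<in>carrier_vec n. A *\<^sub>v p = 0\<^sub>v m \<and>
           (\<forall>z\<in>carrier_vec n. A *\<^sub>v z = 0\<^sub>v m \<longrightarrow> (y - p) \<bullet> z = 0)"
proof -
  obtain p where p: "p \<in> carrier_vec n" "A *\<^sub>v p = 0\<^sub>v m"
    and nearest: "\<And>q. q \<in> carrier_vec n \<Longrightarrow> A *\<^sub>v q = 0\<^sub>v m \<Longrightarrow> (y - p) \<bullet> (y - p) \<le> (y - q) \<bullet> (y - q)"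
    using nearest_point_of_null_space_exists[OF A y] by blast
  have "(y - p) \<bullet> z = 0" if z: "z \<in> carrier_vec n" "A *\<^sub>v z = 0\<^sub>v m" for z
  proof (rule orthogonal_if_nearest[OF y p(1) z(1)])
    fix t
    have "A *\<^sub>v (p + t \<cdot>\<^sub>v z) = 0\<^sub>v m"
      using A p z by (simp add: mult_add_distrib_mat_vec[OF A] mult_mat_vec[OF A])
    then show "(y - p) \<bullet> (y - p) \<le> (y - (p + t \<cdot>\<^sub>v z)) \<bullet> (y - (p + t \<cdot>\<^sub>v z))"
      using p z by (intro nearest) auto
  qed
  then show ?thesis using p by blast
qed

lemma proj_null:
  fixes A :: "real mat"
  assumes A: "A \<in> carrier_mat m n" and y: "y \<in> carrier_vec n"
  shows "proj_null A y \<in> carrier_vec n" "A *\<^sub>v proj_null A y = 0\<^sub>v m"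
    and "\<And>z. z \<in> carrier_vec n \<Longrightarrow> A *\<^sub>v z = 0\<^sub>v m \<Longrightarrow> (y - proj_null A y) \<bullet> z = 0"
proof -
  let ?P = "\<lambda>p. p \<in> carrier_vec n \<and> A *\<^sub>v p = 0\<^sub>v m \<and>
     (\<forall>z\<in>carrier_vec n. A *\<^sub>v z = 0\<^sub>v m \<longrightarrow> (y - p) \<bullet> z = 0)"
  have unique: "p = q" if p: "?P p" and q: "?P q" for p q
  proof -
    have d: "p - q \<in> carrier_vec n" "A *\<^sub>v (p - q) = 0\<^sub>v m"
      using p q A by (auto simp: mult_minus_distrib_mat_vec[OF A])
    have "(p - q) \<bullet> (p - q) = (y - q) \<bullet> (p - q) - (y - p) \<bullet> (p - q)"
      using p q y by (simp add: minus_scalar_prod_distrib[of _ n] scalar_prod_minus_distrib[of _ n])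
    also have "\<dots> = 0" using p q d by simp
    finally show ?thesis using sprod_self_eq_0_iff[OF d(1)] p q by (auto simp: vec_eq_iff)
  qed
  have "\<exists>p. ?P p" using null_space_projection_exists[OF A y] by blast
  then have "?P (THE p. ?P p)" by (rule theI'[OF ex_ex1I]) (rule unique)
  moreover have "dim_col A = n" "dim_row A = m" using A by auto
  ultimately have "?P (proj_null A y)" unfolding proj_null_def by simp
  then show "proj_null A y \<in> carrier_vec n" "A *\<^sub>v proj_null A y = 0\<^sub>v m"
    and "\<And>z. z \<in> carrier_vec n \<Longrightarrow> A *\<^sub>v z = 0\<^sub>v m \<Longrightarrow> (y - proj_null A y) \<bullet> z = 0"
    by blast+
qed

lemma min_norm_lsq_consistent:
  fixes A :: "real mat"
  assumes A: "A \<in> carrier_mat m n" and b: "b \<in> carrier_vec m"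
    and consistent: "\<exists>x\<in>carrier_vec n. A *\<^sub>v x = b" and x: "min_norm_lsq A b x"
  shows "x \<in> carrier_vec n" "A *\<^sub>v x = b"
    and "\<And>z. z \<in> carrier_vec n \<Longrightarrow> A *\<^sub>v z = 0\<^sub>v m \<Longrightarrow> x \<bullet> z = 0"
proof -
  have lsq: "lsq_solution A b x" and min: "\<And>z. lsq_solution A b z \<Longrightarrow> vnorm2 x \<le> vnorm2 z"
    using x unfolding min_norm_lsq_def by blast+
  show x_carrier: "x \<in> carrier_vec n"
    using lsq A unfolding lsq_solution_def by simp
  obtain x0 where x0: "x0 \<in> carrier_vec n" "A *\<^sub>v x0 = b" using consistent by blast
  have "vnorm2 (A *\<^sub>v x - b) \<le> vnorm2 (A *\<^sub>v x0 - b)"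
    using lsq x0(1) A unfolding lsq_solution_def by (simp add: carrier_matD)
  also have "\<dots> = 0" using x0 b by (simp add: vnorm2_def)
  finally have "(A *\<^sub>v x - b) \<bullet> (A *\<^sub>v x - b) = 0"
    using vnorm2_sq[of "A *\<^sub>v x - b"] sprod_self_nonneg[of "A *\<^sub>v x - b"] vnorm2_def by simp
  then have "A *\<^sub>v x - b = 0\<^sub>v m" using sprod_self_eq_0_iff[of _ m] A b x_carrier by simp
  then show Ax: "A *\<^sub>v x = b" using A b x_carrier by (auto simp: vec_eq_iff)
  fix z assume z: "z \<in> carrier_vec n" "A *\<^sub>v z = 0\<^sub>v m"
  have "(0\<^sub>v n - x) \<bullet> z = 0"
  proof (rule orthogonal_if_nearest[OF zero_carrier_vec x_carrier z(1)])
    fix t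
    have "A *\<^sub>v (x + t \<cdot>\<^sub>v z) = b"
      using A b x_carrier z Ax by (simp add: mult_add_distrib_mat_vec[OF A] mult_mat_vec[OF A])
    then have "lsq_solution A b (x + t \<cdot>\<^sub>v z)"
      using A b x_carrier z unfolding lsq_solution_def by (auto simp: vnorm2_def sprod_self_nonneg)
    then have "vnorm2 x \<le> vnorm2 (x + t \<cdot>\<^sub>v z)" by (rule min)
    then have "x \<bullet> x \<le> (x + t \<cdot>\<^sub>v z) \<bullet> (x + t \<cdot>\<^sub>v z)"
      unfolding vnorm2_def using sprod_self_nonneg[of x] by simp
    moreover have "(0\<^sub>v n - w) \<bullet> (0\<^sub>v n - w) = w \<bullet> w" if "w \<in> carrier_vec n" for w :: "real vec"
      using sprod_minus_self[OF zero_carrier_vec that] that by simp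
    ultimately show "(0\<^sub>v n - x) \<bullet> (0\<^sub>v n - x) \<le> (0\<^sub>v n - (x + t \<cdot>\<^sub>v z)) \<bullet> (0\<^sub>v n - (x + t \<cdot>\<^sub>v z))"
      using x_carrier z by simp
  qed
  then show "x \<bullet> z = 0" using x_carrier z by (simp add: minus_scalar_prod_distrib[of _ n])
qed

section \<open>Singular values and contractions\<close>

lemma finite_singular_values:
  assumes Q: "Q \<in> carrier_mat n n"
  shows "finite {s. singular_value Q s}"
proof -
  let ?B = "transpose_mat Q * Q"
  have B: "?B \<in> carrier_mat n n" using Q by simp
  have "{s. singular_value Q s} \<subseteq> sqrt ` {r. poly (char_poly ?B) r = 0}"
  proof
    fix s assume "s \<in> {s. singular_value Q s}"
    then have "s = sqrt (s\<^sup>2)" "poly (char_poly ?B) (s\<^sup>2) = 0"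
      unfolding singular_value_def using eigenvalue_root_char_poly[OF B] by auto
    then show "s \<in> sqrt ` {r. poly (char_poly ?B) r = 0}" by blast
  qed
  moreover have "char_poly ?B \<noteq> 0" using degree_monic_char_poly[OF B] by auto
  then have "finite {r. poly (char_poly ?B) r = 0}" by (rule poly_roots_finite)
  ultimately show ?thesis by (meson finite_surj)
qed

lemma max_sv01_ge:
  assumes Q: "Q \<in> carrier_mat n n"
  shows "0 \<le> max_sv01 Q" and "singular_value Q s \<Longrightarrow> 0 < s \<Longrightarrow> s < 1 \<Longrightarrow> s \<le> max_sv01 Q"
proof -
  have "finite (insert 0 {s. singular_value Q s \<and> 0 < s \<and> s < 1})"
    using finite_singular_values[OF Q] by (simp add: Collect_conj_eq finite_Int)
  then show "0 \<le> max_sv01 Q" and "singular_value Q s \<Longrightarrow> 0 < s \<Longrightarrow> s < 1 \<Longrightarrow> s \<le> max_sv01 Q"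
    unfolding max_sv01_def by (auto intro: Max_ge)
qed

lemma sprod_self_normalized:
  fixes w :: "real vec"
  assumes "w \<in> carrier_vec n" "w \<noteq> 0\<^sub>v n"
  shows "((1 / sqrt (w \<bullet> w)) \<cdot>\<^sub>v w) \<bullet> ((1 / sqrt (w \<bullet> w)) \<cdot>\<^sub>v w) = 1"
  using assms sprod_self_pos_iff[OF assms(1)]
  by (simp add: power2_eq_square[symmetric] power_divide)

lemma quadratic_form_max_on_orthogonal_complement:
  fixes B :: "real mat"
  assumes B: "B \<in> carrier_mat n n" and Z: "Z \<subseteq> carrier_vec n"
    and e: "e \<in> carrier_vec n" "\<forall>z\<in>Z. e \<bullet> z = 0" "e \<noteq> 0\<^sub>v n"
  shows "\<exists>v\<in>carrier_vec n. v \<bullet> v = 1 \<and> (\<forall>z\<in>Z. v \<bullet> z = 0) \<and>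
           (\<forall>w\<in>carrier_vec n. (\<forall>z\<in>Z. w \<bullet> z = 0) \<longrightarrow> w \<bullet> (B *\<^sub>v w) \<le> (v \<bullet> (B *\<^sub>v v)) * (w \<bullet> w))"
proof -
  define K where "K = {x \<in> carrier_vec n. x \<bullet> x = 1 \<and> (\<forall>z\<in>Z. x \<bullet> z = 0)}"
  have unit_in_K: "(1 / sqrt (w \<bullet> w)) \<cdot>\<^sub>v w \<in> K"
    if "w \<in> carrier_vec n" "\<forall>z\<in>Z. w \<bullet> z = 0" "w \<noteq> 0\<^sub>v n" for w
    using that sprod_self_normalized[of w n] Z unfolding K_def by (auto simp: subsetD)
  have "closedin (coord_topology n) {g \<in> topspace (coord_topology n).
      vec n g \<bullet> (1\<^sub>m n *\<^sub>v vec n g) \<in> {1} \<and> (\<forall>z\<in>Z. vec n g \<bullet> z = 0)}"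
    by (intro closedin_coords_orthogonal continuous_map_quadratic_form Z) auto
  moreover have "{g \<in> topspace (coord_topology n).
      vec n g \<bullet> (1\<^sub>m n *\<^sub>v vec n g) \<in> {1} \<and> (\<forall>z\<in>Z. vec n g \<bullet> z = 0)}
    = {g \<in> topspace (coord_topology n). vec n g \<in> K}"
    unfolding K_def by auto
  ultimately have closed: "closedin (coord_topology n) {g \<in> topspace (coord_topology n). vec n g \<in> K}"
    by simp
  have K: "K \<subseteq> carrier_vec n" "\<And>x. x \<in> K \<Longrightarrow> x \<bullet> x \<le> 1" unfolding K_def by auto
  have "K \<noteq> {}" using unit_in_K[OF e] by blast
  then have "\<exists>v\<in>K. \<forall>x\<in>K. x \<bullet> (B *\<^sub>v x) \<le> v \<bullet> (B *\<^sub>v v)"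
    by (rule continuous_attains_max_on_vecs[OF closed K(1) _ K(2) continuous_map_quadratic_form[OF B]])
  then obtain v where v: "v \<in> K" and max: "\<And>x. x \<in> K \<Longrightarrow> x \<bullet> (B *\<^sub>v x) \<le> v \<bullet> (B *\<^sub>v v)"
    by blast
  have "w \<bullet> (B *\<^sub>v w) \<le> (v \<bullet> (B *\<^sub>v v)) * (w \<bullet> w)"
    if w: "w \<in> carrier_vec n" "\<forall>z\<in>Z. w \<bullet> z = 0" for w
  proof (cases "w = 0\<^sub>v n")
    case False
    define c where "c = 1 / sqrt (w \<bullet> w)"
    have "c\<^sup>2 * (w \<bullet> (B *\<^sub>v w)) \<le> v \<bullet> (B *\<^sub>v v)"
      using max[OF unit_in_K[OF w False]] w B unfolding c_def[symmetric]
      by (simp add: mult_mat_vec power2_eq_square)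
    moreover have "c\<^sup>2 = 1 / (w \<bullet> w)"
      unfolding c_def using sprod_self_nonneg[of w] by (simp add: power_divide)
    ultimately show ?thesis
      using sprod_self_pos_iff[OF w(1)] False by (simp add: divide_le_eq mult.commute)
  qed (use B in simp)
  then show ?thesis using v unfolding K_def by blast
qed

lemma quadratic_form_maximizer_is_eigenvector:
  fixes B :: "real mat"
  assumes B: "B \<in> carrier_mat n n" and sym: "transpose_mat B = B" and Z: "Z \<subseteq> carrier_vec n"
    and invariant: "\<And>w. w \<in> carrier_vec n \<Longrightarrow> \<forall>z\<in>Z. w \<bullet> z = 0 \<Longrightarrow> \<forall>z\<in>Z. (B *\<^sub>v w) \<bullet> z = 0"
    and v: "v \<in> carrier_vec n" "v \<bullet> v = 1" "\<forall>z\<in>Z. v \<bullet> z = 0"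
    and max: "\<And>w. w \<in> carrier_vec n \<Longrightarrow> \<forall>z\<in>Z. w \<bullet> z = 0 \<Longrightarrow>
                w \<bullet> (B *\<^sub>v w) \<le> (v \<bullet> (B *\<^sub>v v)) * (w \<bullet> w)"
  shows "B *\<^sub>v v = (v \<bullet> (B *\<^sub>v v)) \<cdot>\<^sub>v v"
proof -
  define l where "l = v \<bullet> (B *\<^sub>v v)"
  have sym_form: "x \<bullet> (B *\<^sub>v w) = w \<bullet> (B *\<^sub>v x)" if "x \<in> carrier_vec n" "w \<in> carrier_vec n" for x w
    using transpose_vec_mult_scalar[OF B that(2,1)] sym comm_scalar_prod[of "B *\<^sub>v x" n w] B that
    by simp
  \<comment> \<open>first-order condition of the constrained maximum along \<open>v + t u\<close>\<close>
  have lagrange: "u \<bullet> (B *\<^sub>v v) = l * (u \<bullet> v)" if u: "u \<in> carrier_vec n" "\<forall>z\<in>Z. u \<bullet> z = 0" for u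
  proof -
    have "0 \<le> t * (2 * (l * (u \<bullet> v) - u \<bullet> (B *\<^sub>v v))) + t\<^sup>2 * (l * (u \<bullet> u) - u \<bullet> (B *\<^sub>v u))" for t
    proof -
      have w: "v + t \<cdot>\<^sub>v u \<in> carrier_vec n" "\<forall>z\<in>Z. (v + t \<cdot>\<^sub>v u) \<bullet> z = 0"
        using u v Z by (auto simp: add_scalar_prod_distrib[of _ n] subsetD)
      have "B *\<^sub>v (v + t \<cdot>\<^sub>v u) = B *\<^sub>v v + t \<cdot>\<^sub>v (B *\<^sub>v u)"
        using u v B by (simp add: mult_add_distrib_mat_vec[OF B] mult_mat_vec[OF B])
      then have "(v + t \<cdot>\<^sub>v u) \<bullet> (B *\<^sub>v (v + t \<cdot>\<^sub>v u)) = l + 2 * t * (u \<bullet> (B *\<^sub>v v)) + t\<^sup>2 * (u \<bullet> (B *\<^sub>v u))"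
        using sprod_add_smult_expand[of v n u "B *\<^sub>v v" "B *\<^sub>v u" t] sym_form[OF v(1) u(1)] u v B
        unfolding l_def by simp
      moreover have "(v + t \<cdot>\<^sub>v u) \<bullet> (v + t \<cdot>\<^sub>v u) = 1 + 2 * t * (u \<bullet> v) + t\<^sup>2 * (u \<bullet> u)"
        using sprod_add_smult_expand[of v n u v u t] u v comm_scalar_prod[of u n v] by simp
      ultimately show ?thesis using max[OF w] unfolding l_def[symmetric] by (simp add: algebra_simps)
    qed
    then show ?thesis using linear_coeff_eq_0_if_quadratic_nonneg by fastforce
  qed
  define r where "r = B *\<^sub>v v - l \<cdot>\<^sub>v v"
  have r: "r \<in> carrier_vec n" "\<forall>z\<in>Z. r \<bullet> z = 0"
    unfolding r_def using invariant[OF v(1,3)] v B Z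
    by (auto simp: minus_scalar_prod_distrib[of _ n] subsetD)
  have "r \<bullet> r = r \<bullet> (B *\<^sub>v v) - l * (r \<bullet> v)"
    using r(1) v(1) B unfolding r_def by (simp add: scalar_prod_minus_distrib[of _ n])
  then have "r = 0\<^sub>v n" using lagrange[OF r] sprod_self_eq_0_iff[OF r(1)] by simp
  then show ?thesis using B v unfolding r_def l_def[symmetric] by (auto simp: vec_eq_iff)
qed

lemma sprod_transpose_mult_self:
  fixes Q :: "real mat"
  assumes "Q \<in> carrier_mat n n" "x \<in> carrier_vec n"
  shows "x \<bullet> ((transpose_mat Q * Q) *\<^sub>v x) = (Q *\<^sub>v x) \<bullet> (Q *\<^sub>v x)"
  using assms transpose_vec_mult_scalar[of Q n n x "Q *\<^sub>v x"] comm_scalar_prod[of x n]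
  by simp

lemma eigenvalue_transpose_mult_le_max_sv01:
  fixes Q :: "real mat"
  assumes Q: "Q \<in> carrier_mat n n" and v: "v \<in> carrier_vec n" "v \<noteq> 0\<^sub>v n"
    and eigen: "(transpose_mat Q * Q) *\<^sub>v v = l \<cdot>\<^sub>v v" and l: "0 \<le> l" "l < 1"
  shows "l \<le> (max_sv01 Q)\<^sup>2"
proof (cases "l = 0")
  case False
  have "singular_value Q (sqrt l)"
    unfolding singular_value_def eigenvalue_def eigenvector_def using l eigen v Q by auto
  then have "sqrt l \<le> max_sv01 Q" using max_sv01_ge(2)[OF Q] l False by simp
  then show ?thesis using l(1) by (metis real_sqrt_ge_zero real_sqrt_pow2 power_mono)
qed simp

lemma transpose_mult_preserves_orthogonal:
  fixes Q :: "real mat"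
  assumes Q: "Q \<in> carrier_mat n n" and Z: "Z \<subseteq> carrier_vec n"
    and fixes_Z: "\<And>z. z \<in> Z \<Longrightarrow> Q *\<^sub>v z = z"
    and transpose_fixes_Z: "\<And>z. z \<in> Z \<Longrightarrow> transpose_mat Q *\<^sub>v z = z"
    and w: "w \<in> carrier_vec n" "\<forall>z\<in>Z. w \<bullet> z = 0"
  shows "\<forall>z\<in>Z. ((transpose_mat Q * Q) *\<^sub>v w) \<bullet> z = 0"
proof
  fix z assume z: "z \<in> Z"
  have zc: "z \<in> carrier_vec n" using z Z by auto
  have "((transpose_mat Q * Q) *\<^sub>v w) \<bullet> z = (Q *\<^sub>v w) \<bullet> (Q *\<^sub>v z)"
    using transpose_vec_mult_scalar[OF Q zc, of "Q *\<^sub>v w"] Q w by simp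
  also have "\<dots> = (transpose_mat Q *\<^sub>v z) \<bullet> w"
    using fixes_Z[OF z] transpose_vec_mult_scalar[OF Q w(1) zc] comm_scalar_prod[of _ n z] Q w zc
    by simp
  also have "\<dots> = 0" using transpose_fixes_Z[OF z] w z comm_scalar_prod[OF zc w(1)] by simp
  finally show "((transpose_mat Q * Q) *\<^sub>v w) \<bullet> z = 0" .
qed

lemma norm_le_max_sv01_on_orthogonal_complement:
  fixes Q :: "real mat"
  assumes Q: "Q \<in> carrier_mat n n" and Z: "Z \<subseteq> carrier_vec n"
    and contraction: "\<And>x. x \<in> carrier_vec n \<Longrightarrow> (Q *\<^sub>v x) \<bullet> (Q *\<^sub>v x) \<le> x \<bullet> x"
    and isometric: "\<And>x. x \<in> carrier_vec n \<Longrightarrow> (Q *\<^sub>v x) \<bullet> (Q *\<^sub>v x) = x \<bullet> x \<Longrightarrow> x \<in> Z"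
    and fixes_Z: "\<And>z. z \<in> Z \<Longrightarrow> Q *\<^sub>v z = z"
    and transpose_fixes_Z: "\<And>z. z \<in> Z \<Longrightarrow> transpose_mat Q *\<^sub>v z = z"
    and e: "e \<in> carrier_vec n" "\<forall>z\<in>Z. e \<bullet> z = 0"
  shows "(Q *\<^sub>v e) \<bullet> (Q *\<^sub>v e) \<le> (max_sv01 Q)\<^sup>2 * (e \<bullet> e)"
proof (cases "e = 0\<^sub>v n")
  case False
  define B where "B = transpose_mat Q * Q"
  have B: "B \<in> carrier_mat n n" "transpose_mat B = B"
    unfolding B_def using Q by (auto simp: transpose_mult[of _ n n _ n])
  have form: "x \<bullet> (B *\<^sub>v x) = (Q *\<^sub>v x) \<bullet> (Q *\<^sub>v x)" if "x \<in> carrier_vec n" for x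
    unfolding B_def using sprod_transpose_mult_self[OF Q that] .
  have invariant: "\<forall>z\<in>Z. (B *\<^sub>v w) \<bullet> z = 0" if "w \<in> carrier_vec n" "\<forall>z\<in>Z. w \<bullet> z = 0" for w
    unfolding B_def using transpose_mult_preserves_orthogonal[OF Q Z fixes_Z transpose_fixes_Z that] .
  obtain v where v: "v \<in> carrier_vec n" "v \<bullet> v = 1" "\<forall>z\<in>Z. v \<bullet> z = 0"
    and max: "\<And>w. w \<in> carrier_vec n \<Longrightarrow> \<forall>z\<in>Z. w \<bullet> z = 0 \<Longrightarrow>
                w \<bullet> (B *\<^sub>v w) \<le> (v \<bullet> (B *\<^sub>v v)) * (w \<bullet> w)"
    using quadratic_form_max_on_orthogonal_complement[OF B(1) Z e False] by blast
  define l where "l = v \<bullet> (B *\<^sub>v v)"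
  have eigen: "B *\<^sub>v v = l \<cdot>\<^sub>v v"
    unfolding l_def by (rule quadratic_form_maximizer_is_eigenvector[OF B Z invariant v max])
  have l: "0 \<le> l" "l \<le> 1"
    using form[OF v(1)] contraction[OF v(1)] sprod_self_nonneg[of "Q *\<^sub>v v"] v(2) unfolding l_def by auto
  have "l \<noteq> 1"
  proof
    assume "l = 1"
    then have "v \<in> Z" using isometric[OF v(1)] form[OF v(1)] v(2) unfolding l_def by simp
    then show False using v(2,3) by auto
  qed
  have "l \<le> (max_sv01 Q)\<^sup>2"
  proof (rule eigenvalue_transpose_mult_le_max_sv01[OF Q v(1) _ eigen[unfolded B_def] l(1)])
    show "v \<noteq> 0\<^sub>v n" using v(2) by auto
    show "l < 1" using l(2) \<open>l \<noteq> 1\<close> by simp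
  qed
  then have "e \<bullet> (B *\<^sub>v e) \<le> (max_sv01 Q)\<^sup>2 * (e \<bullet> e)"
    using max[OF e] sprod_self_nonneg[of e] unfolding l_def[symmetric]
    by (meson mult_right_mono order_trans)
  then show ?thesis using form[OF e(1)] by simp
qed (use contraction[OF e(1)] in simp)

section \<open>The relaxed projections and their product\<close>

lemma Pmat_carrier: "Pmat A u k \<in> carrier_mat (dim_col A) (dim_col A)"
  unfolding carrier_mat_def Pmat_def outer_def by simp

lemma Pmat_symmetric: "transpose_mat (Pmat A u k) = Pmat A u k"
  by (rule eq_matI) (auto simp: Pmat_def outer_def)

lemma Pmat_mult_vec:
  assumes x: "x \<in> carrier_vec (dim_col A)"
  shows "Pmat A u k *\<^sub>v x = x - (u k / (row A k \<bullet> row A k) * (row A k \<bullet> x)) \<cdot>\<^sub>v row A k"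
proof (rule eq_vecI)
  define c where "c = u k / (row A k \<bullet> row A k)"
  fix i assume "i < dim_vec (x - (u k / (row A k \<bullet> row A k) * (row A k \<bullet> x)) \<cdot>\<^sub>v row A k)"
  then have i: "i < dim_col A" by simp
  have "(Pmat A u k *\<^sub>v x) $ i = (\<Sum>j<dim_col A. Pmat A u k $$ (i, j) * x $ j)"
    by (rule index_mult_mat_vec_sum[OF Pmat_carrier x i])
  also have "\<dots> = (\<Sum>j<dim_col A. (if i = j then x $ j else 0) - c * row A k $ i * (row A k $ j * x $ j))"
    by (rule sum.cong) (use i in \<open>auto simp: Pmat_def outer_def vnorm2_sq c_def algebra_simps\<close>)
  also have "\<dots> = x $ i - c * row A k $ i * (row A k \<bullet> x)"
    using i x by (simp add: sum_subtractf sum_distrib_left[symmetric] scalar_prod_def lessThan_atLeast0)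
  finally show "(Pmat A u k *\<^sub>v x) $ i = (x - (u k / (row A k \<bullet> row A k) * (row A k \<bullet> x)) \<cdot>\<^sub>v row A k) $ i"
    using i x unfolding c_def by simp
qed (use x in \<open>simp add: Pmat_def outer_def\<close>)

lemma Pmat_fixes_orthogonal:
  "x \<in> carrier_vec (dim_col A) \<Longrightarrow> row A k \<bullet> x = 0 \<Longrightarrow> Pmat A u k *\<^sub>v x = x"
  by (simp add: Pmat_mult_vec vec_eq_iff)

lemma sprod_Pmat_self:
  assumes x: "x \<in> carrier_vec (dim_col A)"
  shows "(Pmat A u k *\<^sub>v x) \<bullet> (Pmat A u k *\<^sub>v x)
    = x \<bullet> x - u k * (2 - u k) * (row A k \<bullet> x)\<^sup>2 / (row A k \<bullet> row A k)"
proof -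
  let ?a = "row A k"
  define c where "c = u k / (?a \<bullet> ?a) * (?a \<bullet> x)"
  have "Pmat A u k *\<^sub>v x = x + (- c) \<cdot>\<^sub>v ?a"
    unfolding Pmat_mult_vec[OF x] c_def using x by (auto simp: vec_eq_iff)
  then have "(Pmat A u k *\<^sub>v x) \<bullet> (Pmat A u k *\<^sub>v x) = x \<bullet> x - 2 * c * (?a \<bullet> x) + c\<^sup>2 * (?a \<bullet> ?a)"
    using sprod_add_smult_expand[OF x row_carrier x row_carrier, of "- c"] comm_scalar_prod[OF x row_carrier]
    by simp
  also have "\<dots> = x \<bullet> x - u k * (2 - u k) * (?a \<bullet> x)\<^sup>2 / (?a \<bullet> ?a)"
    unfolding c_def by (cases "?a \<bullet> ?a = 0") (simp_all add: field_simps power2_eq_square)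
  finally show ?thesis .
qed

lemma Qfrom_carrier: "Qfrom A u j \<in> carrier_mat (dim_col A) (dim_col A)"
proof -
  have "foldr (\<lambda>k M. M * Pmat A u k) ks (1\<^sub>m (dim_col A)) \<in> carrier_mat (dim_col A) (dim_col A)" for ks
    by (induction ks) (auto intro: mult_carrier_mat Pmat_carrier)
  then show ?thesis unfolding Qfrom_def .
qed

lemma Qfrom_Suc: "j < dim_row A \<Longrightarrow> Qfrom A u j = Qfrom A u (Suc j) * Pmat A u j"
  unfolding Qfrom_def by (simp add: upt_conv_Cons)

lemma Qfrom_ge: "dim_row A \<le> j \<Longrightarrow> Qfrom A u j = 1\<^sub>m (dim_col A)"
  unfolding Qfrom_def by simp

lemma Qfrom_mult_vec_Suc:
  "j < dim_row A \<Longrightarrow> x \<in> carrier_vec (dim_col A) \<Longrightarrow>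
    Qfrom A u j *\<^sub>v x = Qfrom A u (Suc j) *\<^sub>v (Pmat A u j *\<^sub>v x)"
  unfolding Qfrom_Suc by (rule assoc_mult_mat_vec[OF Qfrom_carrier Pmat_carrier])

lemma Qfrom_fixes_null_space:
  assumes z: "z \<in> carrier_vec (dim_col A)" "\<forall>i<dim_row A. row A i \<bullet> z = 0"
  shows "Qfrom A u j *\<^sub>v z = z \<and> transpose_mat (Qfrom A u j) *\<^sub>v z = z"
proof (induction "dim_row A - j" arbitrary: j)
  case 0
  then show ?case using z by (simp add: Qfrom_ge)
next
  case (Suc d)
  then have j: "j < dim_row A" by simp
  have P: "Pmat A u j *\<^sub>v z = z" using z j by (simp add: Pmat_fixes_orthogonal)
  have IH: "Qfrom A u (Suc j) *\<^sub>v z = z \<and> transpose_mat (Qfrom A u (Suc j)) *\<^sub>v z = z"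
    using Suc(1)[of "Suc j"] Suc(2) by simp
  have "transpose_mat (Qfrom A u j) = Pmat A u j * transpose_mat (Qfrom A u (Suc j))"
    unfolding Qfrom_Suc[OF j] using transpose_mult[OF Qfrom_carrier Pmat_carrier] Pmat_symmetric by simp
  then have "transpose_mat (Qfrom A u j) *\<^sub>v z = Pmat A u j *\<^sub>v (transpose_mat (Qfrom A u (Suc j)) *\<^sub>v z)"
    by (simp add: assoc_mult_mat_vec[OF Pmat_carrier _ z(1)] Qfrom_carrier)
  then show ?case using IH P Qfrom_mult_vec_Suc[OF j z(1)] by simp
qed

lemma Qfrom_contraction:
  assumes nonzero: "\<forall>i<dim_row A. row A i \<noteq> 0\<^sub>v (dim_col A)"
    and u: "\<forall>i<dim_row A. 0 < u i \<and> u i < 2"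
    and x: "x \<in> carrier_vec (dim_col A)"
  shows "(Qfrom A u j *\<^sub>v x) \<bullet> (Qfrom A u j *\<^sub>v x) \<le> x \<bullet> x \<and>
    ((Qfrom A u j *\<^sub>v x) \<bullet> (Qfrom A u j *\<^sub>v x) = x \<bullet> x \<longrightarrow> (\<forall>i\<in>{j..<dim_row A}. row A i \<bullet> x = 0))"
  using x
proof (induction "dim_row A - j" arbitrary: j x)
  case 0
  then show ?case by (simp add: Qfrom_ge)
next
  case (Suc d)
  then have j: "j < dim_row A" by simp
  let ?a = "row A j" and ?Q = "Qfrom A u (Suc j)"
  define y where "y = Pmat A u j *\<^sub>v x"
  define loss where "loss = u j * (2 - u j) * (?a \<bullet> x)\<^sup>2 / (?a \<bullet> ?a)"
  have y: "y \<in> carrier_vec (dim_col A)"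
    unfolding y_def by (rule mult_mat_vec_carrier[OF Pmat_carrier Suc(3)])
  have Qx: "Qfrom A u j *\<^sub>v x = ?Q *\<^sub>v y" unfolding y_def by (rule Qfrom_mult_vec_Suc[OF j Suc(3)])
  have aa: "?a \<bullet> ?a > 0" using nonzero j sprod_self_pos_iff[OF row_carrier] by blast
  have yy: "y \<bullet> y = x \<bullet> x - loss" unfolding y_def loss_def by (rule sprod_Pmat_self[OF Suc(3)])
  have loss: "0 \<le> loss" "loss = 0 \<longleftrightarrow> ?a \<bullet> x = 0"
    using u j aa unfolding loss_def by (auto intro!: divide_nonneg_pos mult_nonneg_nonneg)
  have IH: "(?Q *\<^sub>v y) \<bullet> (?Q *\<^sub>v y) \<le> y \<bullet> y \<and>
    ((?Q *\<^sub>v y) \<bullet> (?Q *\<^sub>v y) = y \<bullet> y \<longrightarrow> (\<forall>i\<in>{Suc j..<dim_row A}. row A i \<bullet> y = 0))"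
    using Suc(1)[of "Suc j" y] Suc(2) y by simp
  have "\<forall>i\<in>{j..<dim_row A}. row A i \<bullet> x = 0"
    if eq: "(Qfrom A u j *\<^sub>v x) \<bullet> (Qfrom A u j *\<^sub>v x) = x \<bullet> x"
  proof -
    have "loss = 0" using IH yy loss eq unfolding Qx by linarith
    then have ax: "?a \<bullet> x = 0" using loss by simp
    then have "y = x" unfolding y_def using Suc(3) by (rule Pmat_fixes_orthogonal[rotated])
    then have "\<forall>i\<in>{Suc j..<dim_row A}. row A i \<bullet> x = 0" using IH eq unfolding Qx by simp
    then show ?thesis using ax by (metis atLeastLessThan_iff le_antisym not_less_eq_eq)
  qed
  then show ?case using IH yy loss unfolding Qx by linarith
qed

lemma Qmat_carrier: "A \<in> carrier_mat m n \<Longrightarrow> Qmat A u \<in> carrier_mat n n"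
  unfolding Qmat_def using Qfrom_carrier[of A u 0] by simp

lemma Qmat_telescoping:
  assumes x: "x \<in> carrier_vec (dim_col A)" and l: "l < dim_col A"
  shows "x $ l - (Qmat A u *\<^sub>v x) $ l = (\<Sum>i<dim_row A. (Qfrom A u (Suc i) *\<^sub>v row A i) $ l *
            (u i / (row A i \<bullet> row A i) * (row A i \<bullet> x)))"
proof -
  define f where "f i = (Qfrom A u i *\<^sub>v x) $ l" for i
  have step: "f (Suc i) - f i = (Qfrom A u (Suc i) *\<^sub>v row A i) $ l *
            (u i / (row A i \<bullet> row A i) * (row A i \<bullet> x))" if i: "i < dim_row A" for i
  proof -
    let ?Q = "Qfrom A u (Suc i)" and ?a = "row A i"
    define c where "c = u i / (?a \<bullet> ?a) * (?a \<bullet> x)"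
    have "Qfrom A u i *\<^sub>v x = ?Q *\<^sub>v (x - c \<cdot>\<^sub>v ?a)"
      unfolding Qfrom_mult_vec_Suc[OF i x] Pmat_mult_vec[OF x] c_def ..
    also have "\<dots> = ?Q *\<^sub>v x - c \<cdot>\<^sub>v (?Q *\<^sub>v ?a)"
      using x by (simp add: mult_minus_distrib_mat_vec[OF Qfrom_carrier] mult_mat_vec[OF Qfrom_carrier])
    finally show ?thesis
      unfolding f_def c_def using l Qfrom_carrier[of A u "Suc i"] by (simp add: carrier_matD)
  qed
  have "x $ l - f 0 = (\<Sum>i<dim_row A. f (Suc i) - f i)"
    using sum_lessThan_telescope[of f "dim_row A"] x Qfrom_ge[of A "dim_row A" u] unfolding f_def by simp
  also have "\<dots> = (\<Sum>i<dim_row A. (Qfrom A u (Suc i) *\<^sub>v row A i) $ l *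
            (u i / (row A i \<bullet> row A i) * (row A i \<bullet> x)))"
    by (rule sum.cong) (auto simp: step)
  finally show ?thesis unfolding f_def Qmat_def .
qed

lemma diag_mult_vec:
  assumes "v \<in> carrier_vec m" "i < m"
  shows "(mat m m (\<lambda>(i, j). if i = j then d i else 0) *\<^sub>v v) $ i = d i * v $ i"
proof -
  have "(mat m m (\<lambda>(i, j). if i = j then d i else 0) *\<^sub>v v) $ i
      = (\<Sum>j<m. (if i = j then d i else 0) * v $ j)"
    using assms by (subst index_mult_mat_vec_sum[of _ m m]) auto
  also have "\<dots> = (\<Sum>j<m. if j = i then d i * v $ j else 0)" by (rule sum.cong) auto
  also have "\<dots> = d i * v $ i" using assms by simp
  finally show ?thesis .
qed

lemma Lambda_M_mult_vec:
  fixes A :: "real mat"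
  assumes A: "A \<in> carrier_mat m n" and x: "x \<in> carrier_vec n" and i: "i < m"
  shows "(Lambda_mat m u *\<^sub>v (M_mat A *\<^sub>v (A *\<^sub>v x))) $ i = u i / (row A i \<bullet> row A i) * (row A i \<bullet> x)"
proof -
  have "M_mat A *\<^sub>v (A *\<^sub>v x) \<in> carrier_vec m" unfolding carrier_vec_def M_mat_def using A by simp
  then have "(Lambda_mat m u *\<^sub>v (M_mat A *\<^sub>v (A *\<^sub>v x))) $ i = u i * (M_mat A *\<^sub>v (A *\<^sub>v x)) $ i"
    unfolding Lambda_mat_def using i by (rule diag_mult_vec)
  also have "(M_mat A *\<^sub>v (A *\<^sub>v x)) $ i = 1 / (vnorm2 (row A i))\<^sup>2 * (A *\<^sub>v x) $ i"
    unfolding M_mat_def using A x i by (intro diag_mult_vec) auto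
  finally show ?thesis using A i by (simp add: vnorm2_sq)
qed

lemma A_S_iteration_matrix:
  fixes A :: "real mat"
  assumes A: "A \<in> carrier_mat m n" and x: "x \<in> carrier_vec n"
  shows "(transpose_mat (A_S A u) * Lambda_mat m u * M_mat A) *\<^sub>v (A *\<^sub>v x) = x - Qmat A u *\<^sub>v x"
proof (rule eq_vecI)
  define T where "T = transpose_mat (A_S A u)"
  define w where "w = Lambda_mat m u *\<^sub>v (M_mat A *\<^sub>v (A *\<^sub>v x))"
  have T: "T \<in> carrier_mat n m" unfolding T_def A_S_def using A by simp
  have carriers: "Lambda_mat m u \<in> carrier_mat m m" "M_mat A \<in> carrier_mat m m"
    unfolding Lambda_mat_def M_mat_def using A by auto
  have Q: "Qmat A u \<in> carrier_mat n n" by (rule Qmat_carrier[OF A])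
  have "(T * Lambda_mat m u * M_mat A) *\<^sub>v (A *\<^sub>v x) = (T * Lambda_mat m u) *\<^sub>v (M_mat A *\<^sub>v (A *\<^sub>v x))"
    using T carriers A x by (intro assoc_mult_mat_vec) auto
  also have "\<dots> = T *\<^sub>v w"
    unfolding w_def using T carriers A x by (intro assoc_mult_mat_vec) auto
  finally have lhs: "(T * Lambda_mat m u * M_mat A) *\<^sub>v (A *\<^sub>v x) = T *\<^sub>v w" .
  have w: "w $ i = u i / (row A i \<bullet> row A i) * (row A i \<bullet> x)" if "i < m" for i
    unfolding w_def by (rule Lambda_M_mult_vec[OF A x that])
  fix l assume "l < dim_vec (x - Qmat A u *\<^sub>v x)"
  then have l: "l < n" using x Q by simp
  have "w \<in> carrier_vec m" unfolding w_def using carriers A x by simp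
  then have "(T *\<^sub>v w) $ l = (\<Sum>i<m. T $$ (l, i) * w $ i)" by (rule index_mult_mat_vec_sum[OF T _ l])
  also have "\<dots> = (\<Sum>i<m. (Qfrom A u (Suc i) *\<^sub>v row A i) $ l * w $ i)"
    by (rule sum.cong) (use l A in \<open>auto simp: T_def A_S_def\<close>)
  also have "\<dots> = x $ l - (Qmat A u *\<^sub>v x) $ l"
    using Qmat_telescoping[of x A l u] w x l A by simp
  finally show "((T * Lambda_mat m u * M_mat A) *\<^sub>v (A *\<^sub>v x)) $ l = (x - Qmat A u *\<^sub>v x) $ l"
    unfolding lhs using x Q l by simp
qed (use A x carrier_matD(1)[OF Qmat_carrier[OF A, of u]] in \<open>simp add: A_S_def\<close>)

section \<open>Convergence of the iteration\<close>

lemma Qmat_fixes_null_space: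
  fixes A :: "real mat"
  assumes A: "A \<in> carrier_mat m n" and z: "z \<in> carrier_vec n" "A *\<^sub>v z = 0\<^sub>v m"
  shows "Qmat A u *\<^sub>v z = z" "transpose_mat (Qmat A u) *\<^sub>v z = z"
  using Qfrom_fixes_null_space[of z A u 0] mult_mat_vec_eq_0_iff[OF A, of z] A z
  unfolding Qmat_def by auto

lemma Qmat_norm_le_max_sv01:
  fixes A :: "real mat"
  assumes A: "A \<in> carrier_mat m n" and nonzero: "\<forall>i<m. row A i \<noteq> 0\<^sub>v n"
    and u: "\<forall>i<m. 0 < u i \<and> u i < 2"
    and e: "e \<in> carrier_vec n" "\<And>z. z \<in> carrier_vec n \<Longrightarrow> A *\<^sub>v z = 0\<^sub>v m \<Longrightarrow> e \<bullet> z = 0"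
  shows "(Qmat A u *\<^sub>v e) \<bullet> (Qmat A u *\<^sub>v e) \<le> (max_sv01 (Qmat A u))\<^sup>2 * (e \<bullet> e)"
proof (rule norm_le_max_sv01_on_orthogonal_complement[OF Qmat_carrier[OF A], of "{z \<in> carrier_vec n. A *\<^sub>v z = 0\<^sub>v m}"])
  fix x :: "real vec" assume x: "x \<in> carrier_vec n"
  have contraction: "(Qmat A u *\<^sub>v x) \<bullet> (Qmat A u *\<^sub>v x) \<le> x \<bullet> x \<and>
    ((Qmat A u *\<^sub>v x) \<bullet> (Qmat A u *\<^sub>v x) = x \<bullet> x \<longrightarrow> (\<forall>i\<in>{0..<m}. row A i \<bullet> x = 0))"
    using Qfrom_contraction[of A u x 0] nonzero u x A unfolding Qmat_def by simp
  then show "(Qmat A u *\<^sub>v x) \<bullet> (Qmat A u *\<^sub>v x) \<le> x \<bullet> x" by blast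
  show "x \<in> {z \<in> carrier_vec n. A *\<^sub>v z = 0\<^sub>v m}"
    if "(Qmat A u *\<^sub>v x) \<bullet> (Qmat A u *\<^sub>v x) = x \<bullet> x"
    using contraction that mult_mat_vec_eq_0_iff[OF A, of x] x by auto
qed (use Qmat_fixes_null_space[OF A] e in auto)

lemma Qmat_preserves_orthogonal_null_space:
  fixes A :: "real mat"
  assumes A: "A \<in> carrier_mat m n"
    and e: "e \<in> carrier_vec n" "e \<bullet> z = 0" and z: "z \<in> carrier_vec n" "A *\<^sub>v z = 0\<^sub>v m"
  shows "(Qmat A u *\<^sub>v e) \<bullet> z = 0"
proof -
  have Q: "Qmat A u \<in> carrier_mat n n" by (rule Qmat_carrier[OF A])
  have "(Qmat A u *\<^sub>v e) \<bullet> z = z \<bullet> (Qmat A u *\<^sub>v e)"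
    using Q e z by (intro comm_scalar_prod[of _ n]) auto
  also have "\<dots> = (transpose_mat (Qmat A u) *\<^sub>v z) \<bullet> e"
    by (rule transpose_vec_mult_scalar[OF Q e(1) z(1), symmetric])
  also have "\<dots> = 0"
    using Qmat_fixes_null_space(2)[OF A z] comm_scalar_prod[OF z(1) e(1)] e by simp
  finally show ?thesis .
qed

lemma geometric_decay:
  fixes f :: "nat \<Rightarrow> real"
  assumes "\<And>k. f (Suc k) \<le> s * f k" and "0 \<le> s"
  shows "f k \<le> s ^ k * f 0"
proof (induction k)
  case (Suc k)
  have "f (Suc k) \<le> s * f k" by (rule assms(1))
  also have "\<dots> \<le> s * (s ^ k * f 0)" using Suc assms(2) by (rule mult_left_mono)
  finally show ?case by simp
qed simp

lemma Qmat_iteration_error_bounds: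
  fixes A :: "real mat" and e :: "nat \<Rightarrow> real vec"
  assumes A: "A \<in> carrier_mat m n" and nonzero: "\<forall>i<m. row A i \<noteq> 0\<^sub>v n"
    and u: "\<forall>i<m. 0 < u i \<and> u i < 2"
    and step: "\<And>k. e (Suc k) = Qmat A u *\<^sub>v e k"
    and e0: "e 0 \<in> carrier_vec n" "\<And>z. z \<in> carrier_vec n \<Longrightarrow> A *\<^sub>v z = 0\<^sub>v m \<Longrightarrow> e 0 \<bullet> z = 0"
  shows "vnorm2 (e (Suc k)) \<le> max_sv01 (Qmat A u) * vnorm2 (e k)"
    and "vnorm2 (e k) \<le> max_sv01 (Qmat A u) ^ k * vnorm2 (e 0)"
proof -
  have Q: "Qmat A u \<in> carrier_mat n n" by (rule Qmat_carrier[OF A])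
  have e: "e k \<in> carrier_vec n \<and> (\<forall>z\<in>carrier_vec n. A *\<^sub>v z = 0\<^sub>v m \<longrightarrow> e k \<bullet> z = 0)" for k
  proof (induction k)
    case (Suc k)
    then show ?case unfolding step using Q A by (auto intro: Qmat_preserves_orthogonal_null_space)
  qed (use e0 in blast)
  have s: "0 \<le> max_sv01 (Qmat A u)" by (rule max_sv01_ge(1)[OF Q])
  show one: "vnorm2 (e (Suc k)) \<le> max_sv01 (Qmat A u) * vnorm2 (e k)" for k
    unfolding step using Qmat_norm_le_max_sv01[OF A nonzero u] e s by (intro vnorm2_le_scaled) auto
  show "vnorm2 (e k) \<le> max_sv01 (Qmat A u) ^ k * vnorm2 (e 0)"
    using one s by (rule geometric_decay)
qed

lemma iteration_error_step:
  fixes A G Q :: "real mat"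
  assumes A: "A \<in> carrier_mat m n" and G: "G \<in> carrier_mat n m" and Q: "Q \<in> carrier_mat n n"
    and GA: "\<And>x. x \<in> carrier_vec n \<Longrightarrow> G *\<^sub>v (A *\<^sub>v x) = x - Q *\<^sub>v x"
    and x: "x \<in> carrier_vec n" "A *\<^sub>v x = b" and p: "p \<in> carrier_vec n" "A *\<^sub>v p = 0\<^sub>v m"
    and y: "y \<in> carrier_vec n"
  shows "(y + G *\<^sub>v (b - A *\<^sub>v y)) - x - p = Q *\<^sub>v (y - x - p)"
proof -
  define w where "w = x + p - y"
  have w: "w \<in> carrier_vec n" unfolding w_def using x p y by simp
  have "b - A *\<^sub>v y = A *\<^sub>v w"
    unfolding w_def using A x p y
    by (simp add: mult_add_distrib_mat_vec[OF A] mult_minus_distrib_mat_vec[OF A] vec_eq_iff)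
  then have step: "G *\<^sub>v (b - A *\<^sub>v y) = w - Q *\<^sub>v w" using GA[OF w] by simp
  have "y - x - p = (- 1) \<cdot>\<^sub>v w" unfolding w_def using x p y by (auto simp: vec_eq_iff)
  then have Qe: "Q *\<^sub>v (y - x - p) = (- 1) \<cdot>\<^sub>v (Q *\<^sub>v w)" using mult_mat_vec[OF Q w] by simp
  show ?thesis
  proof (rule eq_vecI)
    fix i assume "i < dim_vec (Q *\<^sub>v (y - x - p))"
    then have i: "i < n" using Q by simp
    then show "(y + G *\<^sub>v (b - A *\<^sub>v y) - x - p) $ i = (Q *\<^sub>v (y - x - p)) $ i"
      unfolding step Qe using Q w x p y by (simp add: w_def)
  qed (use Q G x p y in simp)
qed

theorem corollary3p13:
  fixes A C :: "real mat" and b xdag :: "real vec" and mu :: "nat \<Rightarrow> real"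
    and y :: "nat \<Rightarrow> real vec" and m n :: nat
  assumes A: "A \<in> carrier_mat m n"
    and nozero: "\<forall>i<m. row A i \<noteq> 0\<^sub>v n"
    and b: "b \<in> carrier_vec m"
    and consistent: "\<exists>x \<in> carrier_vec n. A *\<^sub>v x = b"
    and xdag: "min_norm_lsq A b xdag"
    and mu: "\<forall>i<m. 0 < mu i \<and> mu i < 2"
    and C: "C \<in> carrier_mat m m" "upper_triangular C" "\<forall>i<m. C $$ (i,i) = 1"
    and AS: "A_S A mu = C * A"
    and y0: "y 0 \<in> carrier_vec n"
    and ystep: "\<forall>k. y (Suc k) = y k + (transpose_mat A * transpose_mat C * Lambda_mat m mu * M_mat A)
                                        *\<^sub>v (b - A *\<^sub>v y k)"
  shows "(\<forall>k\<ge>1. vnorm2 (y k - xdag - proj_null A (y 0))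
              \<le> max_sv01 (Qmat A mu) * vnorm2 (y (k - 1) - xdag - proj_null A (y 0)))
       \<and> (\<forall>k\<ge>1. vnorm2 (y k - xdag - proj_null A (y 0))
              \<le> (max_sv01 (Qmat A mu)) ^ k * vnorm2 (y 0 - xdag - proj_null A (y 0)))"
proof -
  define p G where "p = proj_null A (y 0)"
    and "G = transpose_mat A * transpose_mat C * Lambda_mat m mu * M_mat A"
  define e where "e k = y k - xdag - p" for k
  note xdag = min_norm_lsq_consistent[OF A b consistent xdag] and p = proj_null[OF A y0, folded p_def]
  have G: "G \<in> carrier_mat n m" unfolding G_def Lambda_mat_def M_mat_def using A C(1) by auto
  have GA: "G *\<^sub>v (A *\<^sub>v x) = x - Qmat A mu *\<^sub>v x" if "x \<in> carrier_vec n" for x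
    using A_S_iteration_matrix[OF A that, of mu] transpose_mult[OF C(1) A] unfolding AS G_def by simp
  have y: "y k \<in> carrier_vec n" for k using y0 ystep G A b by (induction k) (auto simp: G_def[symmetric])
  have step: "e (Suc k) = Qmat A mu *\<^sub>v e k" for k unfolding e_def ystep[rule_format, folded G_def]
    by (rule iteration_error_step[OF A G Qmat_carrier[OF A] GA xdag(1,2) p(1,2) y])
  have "e 0 = (y 0 - p) - xdag" unfolding e_def using y0 xdag p by (auto simp: vec_eq_iff)
  then have e0: "e 0 \<in> carrier_vec n" "\<And>z. z \<in> carrier_vec n \<Longrightarrow> A *\<^sub>v z = 0\<^sub>v m \<Longrightarrow> e 0 \<bullet> z = 0"
    using y0 xdag p by (auto simp: minus_scalar_prod_distrib[of _ n])
  note bounds = Qmat_iteration_error_bounds[OF A nozero mu step e0]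
  show ?thesis
  proof (intro conjI allI impI)
    fix k :: nat assume "1 \<le> k"
    then obtain j where "k = Suc j" using Suc_le_D by auto
    then show "vnorm2 (y k - xdag - proj_null A (y 0))
        \<le> max_sv01 (Qmat A mu) * vnorm2 (y (k - 1) - xdag - proj_null A (y 0))"
      using bounds(1)[of j] unfolding e_def p_def by simp
  qed (use bounds(2) in \<open>simp add: e_def p_def\<close>)
qed

end
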